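(* The set $\mathcal{AN}_{\operatorname{add}(\mathcal N)}$ is strongly $\mathfrak c$-algebrable in $\left(\mathbb R^{\mathbb R}\right)^{\operatorname{add}(\mathcal N)}$ (in ZFC).
   Context: For a regular infinite cardinal $\kappa$, a $\kappa$-sequence $(x_\alpha)_{\alpha<\kappa}$ converges to $x$ if for every neighbourhood $U$ of $x$ there is $\alpha_0<\kappa$ with $x_\alpha\in U$ for all $\alpha_0<\alpha<\kappa$; $\left(\mathbb R^{\mathbb R}\right)^{\kappa}$ is the commutative real algebra of $\kappa$-sequences of functions $\mathbb R\to\mathbb R$ with indexwise operations. $\operatorname{add}(\mathcal N)$ is the least cardinality of a family of Lebesgue null sets whose union is not null. $\mathcal{AN}_{\kappa}$: $\kappa$-sequences of Lebesgue measurable functions $f_\alpha:\mathbb R\to\mathbb R$ converging pointwise a.e. to a function that is not Lebesgue measurable. $S$ is strongly $\mu$-algebrable if there is a set $X$ of $\mu$ algebraically independent elements such that every nonzero element of the (non-unital) algebra generated by $X$ belongs to $S$. *)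

theory Defs
  imports "HOL-Analysis.Analysis" "HOL-Library.Poly_Mapping"
begin

text \<open>Index sets of kappa-sequences: a cardinal well-order r on a type 'i (Field r = UNIV).
  The ordinal "alpha < beta" is "(alpha, beta) \<in> r \<and> alpha \<noteq> beta".\<close>

definition kconv :: "'i rel \<Rightarrow> ('i \<Rightarrow> 'b::topological_space) \<Rightarrow> 'b \<Rightarrow> bool" where
  "kconv r s L \<longleftrightarrow>
     (\<forall>U. open U \<and> L \<in> U \<longrightarrow>
        (\<exists>a0\<in>Field r. \<forall>a. (a0, a) \<in> r \<and> a \<noteq> a0 \<longrightarrow> s a \<in> U))"

definition is_addN :: "'i rel \<Rightarrow> bool" where
  "is_addN r \<longleftrightarrow> Card_order r \<and>
     (\<exists>F. F \<subseteq> null_sets (lebesgue :: real measure) \<and> ordIso2 (card_of F) r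
          \<and> \<Union>F \<notin> null_sets (lebesgue :: real measure)) \<and>
     (\<forall>F. F \<subseteq> null_sets (lebesgue :: real measure) \<and> ordLess2 (card_of F) r
          \<longrightarrow> \<Union>F \<in> null_sets (lebesgue :: real measure))"

definition AN :: "'i rel \<Rightarrow> ('i \<Rightarrow> real \<Rightarrow> real) set" where
  "AN r = {f. (\<forall>a. f a \<in> borel_measurable lebesgue) \<and>
              (\<exists>g. g \<notin> borel_measurable lebesgue \<and>
                   (AE t in lebesgue. kconv r (\<lambda>a. f a t) (g t)))}"

definition seq_add :: "('i \<Rightarrow> real \<Rightarrow> real) \<Rightarrow> ('i \<Rightarrow> real \<Rightarrow> real) \<Rightarrow> ('i \<Rightarrow> real \<Rightarrow> real)" where
  "seq_add f g = (\<lambda>a t. f a t + g a t)"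
definition seq_mult :: "('i \<Rightarrow> real \<Rightarrow> real) \<Rightarrow> ('i \<Rightarrow> real \<Rightarrow> real) \<Rightarrow> ('i \<Rightarrow> real \<Rightarrow> real)" where
  "seq_mult f g = (\<lambda>a t. f a t * g a t)"
definition seq_scale :: "real \<Rightarrow> ('i \<Rightarrow> real \<Rightarrow> real) \<Rightarrow> ('i \<Rightarrow> real \<Rightarrow> real)" where
  "seq_scale c f = (\<lambda>a t. c * f a t)"

inductive_set gen_alg :: "('i \<Rightarrow> real \<Rightarrow> real) set \<Rightarrow> ('i \<Rightarrow> real \<Rightarrow> real) set"
  for X where
  gen_base: "x \<in> X \<Longrightarrow> x \<in> gen_alg X"
| gen_add: "f \<in> gen_alg X \<Longrightarrow> g \<in> gen_alg X \<Longrightarrow> seq_add f g \<in> gen_alg X"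
| gen_mult: "f \<in> gen_alg X \<Longrightarrow> g \<in> gen_alg X \<Longrightarrow> seq_mult f g \<in> gen_alg X"
| gen_scale: "f \<in> gen_alg X \<Longrightarrow> seq_scale c f \<in> gen_alg X"

text \<open>Polynomials in the variables 0,1,2,... with real coefficients, represented as finitely
  supported maps from monomials (finitely supported exponent vectors) to coefficients;
  evaluation at xs (indexwise/pointwise).\<close>
definition poly_eval :: "((nat \<Rightarrow>\<^sub>0 nat) \<Rightarrow>\<^sub>0 real) \<Rightarrow> (nat \<Rightarrow> ('i \<Rightarrow> real \<Rightarrow> real)) \<Rightarrow> ('i \<Rightarrow> real \<Rightarrow> real)" where
  "poly_eval p xs = (\<lambda>a t. \<Sum>m\<in>Poly_Mapping.keys p. Poly_Mapping.lookup p m * (\<Prod>i\<in>Poly_Mapping.keys (m :: nat \<Rightarrow>\<^sub>0 nat). (xs i a t) ^ Poly_Mapping.lookup m i))"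

text \<open>Algebraic independence (in the sense of non-unital algebras): for distinct
  x_0,...,x_{n-1} in X and any nonzero polynomial P in n variables without constant term,
  P(x_0,...,x_{n-1}) \<noteq> 0.\<close>
definition alg_indep :: "('i \<Rightarrow> real \<Rightarrow> real) set \<Rightarrow> bool" where
  "alg_indep X \<longleftrightarrow>
     (\<forall>n xs p. inj_on xs {..<n} \<and> xs ` {..<n} \<subseteq> X \<and> p \<noteq> 0 \<and> Poly_Mapping.lookup p 0 = 0 \<and>
        (\<forall>m\<in>Poly_Mapping.keys p. Poly_Mapping.keys m \<subseteq> {..<n}) \<longrightarrow> poly_eval p xs \<noteq> (\<lambda>a t. 0))"

text \<open>S is strongly mu-algebrable, where mu is the cardinality of the set M.\<close>
definition strongly_algebrable :: "'m set \<Rightarrow> ('i \<Rightarrow> real \<Rightarrow> real) set \<Rightarrow> bool" where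
  "strongly_algebrable M S \<longleftrightarrow>
     (\<exists>X. ordIso2 (card_of X) (card_of M) \<and> alg_indep X \<and>
          (\<forall>f\<in>gen_alg X. f \<noteq> (\<lambda>a t. 0) \<longrightarrow> f \<in> S))"

end

theory Submission
  imports Defs "HOL-Complex_Analysis.Conformal_Mappings"
begin

text \<open>Fix add(N) null sets with non-null union, enumerated along the well-order, and a
  non-measurable subset B of their union (a Vitali argument). The part S(\<alpha>) of B covered by
  the sets enumerated before \<alpha> is null, and every point of B lies in S(\<alpha>) for all large \<alpha>.
  Put Y(\<alpha>, t) = t + 1[t \<in> S(\<alpha>)] and take as generators the sequences exp(exp(e^u Y(\<alpha>, t))),
  u \<in> \<real>. Every element of the algebra they generate is Q(Y(\<alpha>, t)) for a linear combination Q
  of functions exp(\<Sum> a(r) e^(r y)) with finitely many positive frequencies r and nonnegative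
  a(r). Among finitely many distinct such exponents one eventually dominates all others, so
  Q is either 0 or |Q(y)| \<rightarrow> \<infinity>; this gives algebraic independence. Since Q extends to an
  entire function, Q(y + 1) = Q(y) holds only on a countable set unless Q is 1-periodic, which
  its growth excludes. Hence the pointwise limit Q(t + 1[t \<in> B]) differs from the continuous
  function Q on B up to a null set, and is not measurable.\<close>

section \<open>Non-measurable subsets of non-null sets\<close>

lemma null_if_no_rational_differences:
  fixes W :: "real set"
  assumes W: "W \<in> sets lebesgue" "bounded W"
    and free: "\<And>a b. a \<in> W \<Longrightarrow> b \<in> W \<Longrightarrow> a - b \<in> \<rat> \<Longrightarrow> a = b"
  shows "W \<in> null_sets lebesgue"
proof -
  \<comment> \<open>the translates W + 1/(n+1) are disjoint, all of measure |W|, and stay in a bounded set\<close>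
  define T where "T n = (+) (1 / real (Suc n)) ` W" for n
  obtain R where R: "\<And>w. w \<in> W \<Longrightarrow> \<bar>w\<bar> \<le> R" using W(2) by (auto simp: bounded_iff)
  have T_sets: "range T \<subseteq> sets lebesgue"
    using W(1) unfolding T_def by (auto intro: lebesgue_sets_translation)
  have T_disj: "disjoint_family T"
    unfolding disjoint_family_on_def
  proof (intro ballI impI)
    fix m n :: nat assume "m \<noteq> n"
    show "T m \<inter> T n = {}"
    proof (rule ccontr)
      assume "T m \<inter> T n \<noteq> {}"
      then obtain a b where ab: "a \<in> W" "b \<in> W" "1 / real (Suc m) + a = 1 / real (Suc n) + b"
        unfolding T_def by auto
      then have "a - b = 1 / real (Suc n) - 1 / real (Suc m)" by simp
      then have "a - b \<in> \<rat>" by simp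
      then have "a = b" using free ab by blast
      with ab(3) \<open>m \<noteq> n\<close> show False by simp
    qed
  qed
  have "(\<Union>n. T n) \<subseteq> cball 0 (R + 1)"
  proof
    fix x assume "x \<in> (\<Union>n. T n)"
    then obtain n w where "w \<in> W" "x = 1 / real (Suc n) + w" unfolding T_def by auto
    moreover have "0 \<le> 1 / real (Suc n)" "1 / real (Suc n) \<le> 1" by (simp_all add: field_simps)
    ultimately have "\<bar>x\<bar> \<le> R + 1" using R[of w] by linarith
    then show "x \<in> cball 0 (R + 1)" by simp
  qed
  then have "(\<Union>n. T n) \<in> lmeasurable"
    using T_sets by (intro bounded_set_imp_lmeasurable bounded_subset[OF bounded_cball]) auto
  then have "(\<lambda>n. measure lebesgue (T n)) sums measure lebesgue (\<Union>n. T n)"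
    by (intro measure_UNION[OF T_sets T_disj]) (metis fmeasurableD2 infinity_ennreal_def)
  moreover have "measure lebesgue (T n) = measure lebesgue W" for n
    unfolding T_def by (rule measure_translation)
  ultimately have "summable (\<lambda>n::nat. measure lebesgue W)"
    by (simp add: sums_summable)
  then have "measure lebesgue W = 0" by (simp add: summable_const_iff)
  moreover have "W \<in> lmeasurable" by (rule bounded_set_imp_lmeasurable[OF W(2,1)])
  ultimately show ?thesis by (auto intro: null_setsI simp: emeasure_eq_measure2)
qed

definition vitali_rep :: "real \<Rightarrow> real" where
  "vitali_rep x = (SOME v. v \<in> {0..1} \<and> v - x \<in> \<rat>)"

lemma vitali_rep: "vitali_rep x \<in> {0..1}" "vitali_rep x - x \<in> \<rat>"
proof -
  have "x - of_int \<lfloor>x\<rfloor> \<in> {0..1} \<and> x - of_int \<lfloor>x\<rfloor> - x \<in> \<rat>"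
    by (auto simp: floor_le_iff) (smt (verit) of_int_floor_le real_of_int_floor_add_one_gt)
  then have "vitali_rep x \<in> {0..1} \<and> vitali_rep x - x \<in> \<rat>"
    unfolding vitali_rep_def by (rule someI)
  then show "vitali_rep x \<in> {0..1}" "vitali_rep x - x \<in> \<rat>" by auto
qed

lemma vitali_rep_eq:
  assumes "x - x' \<in> \<rat>"
  shows "vitali_rep x = vitali_rep x'"
proof -
  have "v - x \<in> \<rat> \<longleftrightarrow> v - x' \<in> \<rat>" for v
    using assms Rats_add Rats_diff by (metis diff_add_cancel diff_diff_eq2)
  then show ?thesis unfolding vitali_rep_def by simp
qed

lemma nonmeasurable_subset:
  fixes E :: "real set"
  assumes "E \<notin> null_sets lebesgue"
  obtains B where "B \<subseteq> E" "B \<notin> sets lebesgue"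
proof -
  define V where "V q = (\<lambda>x. vitali_rep x + q) ` UNIV" for q
  have V_null: "E \<inter> V q \<in> null_sets lebesgue" if "E \<inter> V q \<in> sets lebesgue" for q
  proof (rule null_if_no_rational_differences[OF that])
    show "bounded (E \<inter> V q)"
      using vitali_rep(1) by (intro bounded_subset[OF bounded_closed_interval[of q "q + 1"]])
        (auto simp: V_def)
    fix a b assume "a \<in> E \<inter> V q" "b \<in> E \<inter> V q" "a - b \<in> \<rat>"
    then obtain x y where "a = vitali_rep x + q" "b = vitali_rep y + q"
      and "vitali_rep x - vitali_rep y \<in> \<rat>" by (auto simp: V_def)
    moreover have "x - y = (x - vitali_rep x) + (vitali_rep x - vitali_rep y) + (vitali_rep y - y)"
      by simp
    ultimately show "a = b"
      using vitali_rep(2)[of x] vitali_rep(2)[of y] vitali_rep_eq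
      by (metis Rats_add Rats_minus_iff minus_diff_eq)
  qed
  have "x \<in> V (x - vitali_rep x)" "x - vitali_rep x \<in> \<rat>" for x
    using vitali_rep(2)[of x] by (auto simp: V_def intro!: image_eqI[of _ _ x])
      (metis Rats_minus_iff minus_diff_eq)
  then have "E = (\<Union>q\<in>\<rat>. E \<inter> V q)" by blast
  with assms have "\<not> (\<forall>q. E \<inter> V q \<in> sets lebesgue)"
    using V_null by (metis null_sets_UN' countable_rat)
  with that show ?thesis by blast
qed

section \<open>Exponential polynomials\<close>

text \<open>An exponential polynomial is given by its coefficient function on frequencies; the
  definition is meaningful only for finitely supported coefficients (an infinite sum is 0).\<close>

definition exp_poly :: "(real \<Rightarrow> real) \<Rightarrow> real \<Rightarrow> real" where
  "exp_poly A y = (\<Sum>r\<in>{r. A r \<noteq> 0}. A r * exp (r * y))"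

definition pos_spectrum :: "(real \<Rightarrow> real) \<Rightarrow> bool" where
  "pos_spectrum A \<longleftrightarrow> finite {r. A r \<noteq> 0} \<and> (\<forall>r. A r \<noteq> 0 \<longrightarrow> 0 < r)"

definition growing_exponent :: "(real \<Rightarrow> real) \<Rightarrow> bool" where
  "growing_exponent A \<longleftrightarrow> pos_spectrum A \<and> (\<forall>r. 0 \<le> A r) \<and> (\<exists>r. A r \<noteq> 0)"

lemma exp_poly_superset:
  assumes "finite R" "{r. A r \<noteq> 0} \<subseteq> R"
  shows "exp_poly A y = (\<Sum>r\<in>R. A r * exp (r * y))"
  unfolding exp_poly_def by (rule sum.mono_neutral_left) (use assms in auto)

lemma exp_poly_add:
  assumes "finite {r. A r \<noteq> 0}" "finite {r. B r \<noteq> 0}"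
  shows "exp_poly (\<lambda>r. A r + B r) y = exp_poly A y + exp_poly B y"
  using assms by (subst (1 2 3) exp_poly_superset[of "{r. A r \<noteq> 0} \<union> {r. B r \<noteq> 0}"])
    (auto simp: sum.distrib distrib_right)

lemma exp_poly_diff:
  assumes "finite {r. A r \<noteq> 0}" "finite {r. B r \<noteq> 0}"
  shows "exp_poly (\<lambda>r. A r - B r) y = exp_poly A y - exp_poly B y"
  using assms by (subst (1 2 3) exp_poly_superset[of "{r. A r \<noteq> 0} \<union> {r. B r \<noteq> 0}"])
    (auto simp: sum_subtractf left_diff_distrib)

lemma sum_exp_eq_exp_poly:
  assumes "finite K"
  shows "(\<Sum>i\<in>K. a i * exp (b i * y)) = exp_poly (\<lambda>r. \<Sum>i\<in>{i\<in>K. b i = r}. a i) y"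
proof -
  have "{r. (\<Sum>i\<in>{i\<in>K. b i = r}. a i) \<noteq> 0} \<subseteq> b ` K"
  proof
    fix r assume "r \<in> {r. (\<Sum>i\<in>{i\<in>K. b i = r}. a i) \<noteq> 0}"
    then have "{i\<in>K. b i = r} \<noteq> {}" by (intro notI) simp
    then show "r \<in> b ` K" by auto
  qed
  with assms have "exp_poly (\<lambda>r. \<Sum>i\<in>{i\<in>K. b i = r}. a i) y
      = (\<Sum>r\<in>b ` K. (\<Sum>i\<in>{i\<in>K. b i = r}. a i) * exp (r * y))"
    by (intro exp_poly_superset) auto
  also have "\<dots> = (\<Sum>i\<in>K. a i * exp (b i * y))"
    by (subst sum.image_gen[OF assms, of _ b]) (auto simp: sum_distrib_right intro!: sum.cong)
  finally show ?thesis by simp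
qed

lemma pos_spectrum_add:
  assumes "pos_spectrum A" "pos_spectrum B"
  shows "pos_spectrum (\<lambda>r. A r + B r)"
  unfolding pos_spectrum_def
proof (intro conjI allI impI)
  have "{r. A r + B r \<noteq> 0} \<subseteq> {r. A r \<noteq> 0} \<union> {r. B r \<noteq> 0}" by auto
  then show "finite {r. A r + B r \<noteq> 0}"
    using assms unfolding pos_spectrum_def by (meson finite_Un finite_subset)
  show "0 < r" if "A r + B r \<noteq> 0" for r
    using that assms unfolding pos_spectrum_def by (cases "A r = 0") auto
qed

lemma pos_spectrum_diff:
  assumes "pos_spectrum A" "pos_spectrum B"
  shows "pos_spectrum (\<lambda>r. A r - B r)"
  unfolding pos_spectrum_def
proof (intro conjI allI impI)
  have "{r. A r - B r \<noteq> 0} \<subseteq> {r. A r \<noteq> 0} \<union> {r. B r \<noteq> 0}" by auto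
  then show "finite {r. A r - B r \<noteq> 0}"
    using assms unfolding pos_spectrum_def by (meson finite_Un finite_subset)
  show "0 < r" if "A r - B r \<noteq> 0" for r
    using that assms unfolding pos_spectrum_def by (cases "A r = 0") auto
qed

lemma exp_poly_leading_term:
  assumes fin: "finite {r. A r \<noteq> 0}" and ne: "{r. A r \<noteq> 0} \<noteq> {}"
  defines "m \<equiv> Max {r. A r \<noteq> 0}"
  shows "((\<lambda>y. exp_poly A y * exp (- (m * y))) \<longlongrightarrow> A m) at_top"
proof -
  let ?S = "{r. A r \<noteq> 0}"
  have mS: "m \<in> ?S" unfolding m_def using fin ne by (rule Max_in)
  have eq: "exp_poly A y * exp (- (m * y)) = (\<Sum>r\<in>?S. A r * exp ((r - m) * y))" for y
    unfolding exp_poly_def sum_distrib_right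
    by (rule sum.cong) (auto simp: mult.assoc exp_add[symmetric] algebra_simps)
  have "((\<lambda>y. A r * exp ((r - m) * y)) \<longlongrightarrow> (if r = m then A m else 0)) at_top"
    if "r \<in> ?S" for r
  proof (cases "r = m")
    case False
    with that have "r - m < 0" unfolding m_def using fin by (simp add: order_less_le)
    then have "((\<lambda>y. exp ((r - m) * y)) \<longlongrightarrow> 0) at_top"
      by (intro filterlim_compose[OF exp_at_bot] filterlim_tendsto_neg_mult_at_bot[OF tendsto_const]
          filterlim_ident)
    with False show ?thesis by (auto intro: tendsto_mult_right_zero)
  qed simp
  then have "((\<lambda>y. \<Sum>r\<in>?S. A r * exp ((r - m) * y)) \<longlongrightarrow> (\<Sum>r\<in>?S. if r = m then A m else 0)) at_top"
    by (rule tendsto_sum)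
  with mS fin show ?thesis by (simp add: eq sum.delta)
qed

lemma exp_poly_tendsto_infinity:
  assumes A: "pos_spectrum A" and ne: "{r. A r \<noteq> 0} \<noteq> {}"
  defines "m \<equiv> Max {r. A r \<noteq> 0}"
  shows "A m > 0 \<Longrightarrow> filterlim (exp_poly A) at_top at_top"
    and "A m < 0 \<Longrightarrow> filterlim (exp_poly A) at_bot at_top"
proof -
  have fin: "finite {r. A r \<noteq> 0}" using A unfolding pos_spectrum_def by auto
  have "A m \<noteq> 0" unfolding m_def using Max_in[OF fin ne] by simp
  then have "m > 0" using A unfolding pos_spectrum_def by auto
  then have E: "filterlim (\<lambda>y. exp (m * y)) at_top at_top"
    by (intro filterlim_compose[OF exp_at_top] filterlim_tendsto_pos_mult_at_top[OF tendsto_const]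
        filterlim_ident)
  have L: "((\<lambda>y. exp_poly A y * exp (- (m * y))) \<longlongrightarrow> A m) at_top"
    unfolding m_def using exp_poly_leading_term[OF fin ne] .
  have eq: "exp_poly A = (\<lambda>y. exp_poly A y * exp (- (m * y)) * exp (m * y))"
    by (auto simp: mult.assoc exp_add[symmetric])
  show "A m > 0 \<Longrightarrow> filterlim (exp_poly A) at_top at_top"
    by (subst eq, rule filterlim_tendsto_pos_mult_at_top[OF L _ E])
  show "A m < 0 \<Longrightarrow> filterlim (exp_poly A) at_bot at_top"
    by (subst eq, rule filterlim_tendsto_neg_mult_at_bot[OF L _ E])
qed

lemma growing_exponent_tendsto:
  assumes "growing_exponent A"
  shows "filterlim (exp_poly A) at_top at_top"
proof -
  from assms have A: "pos_spectrum A" and ne: "{r. A r \<noteq> 0} \<noteq> {}" and pos: "\<And>r. A r \<ge> 0"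
    unfolding growing_exponent_def by auto
  have "finite {r. A r \<noteq> 0}" using A unfolding pos_spectrum_def by auto
  then have "A (Max {r. A r \<noteq> 0}) \<noteq> 0" using Max_in[OF _ ne] by simp
  with pos have "A (Max {r. A r \<noteq> 0}) > 0" by (simp add: order_less_le)
  then show ?thesis by (rule exp_poly_tendsto_infinity(1)[OF A ne])
qed

lemma growing_exponent_add:
  assumes "growing_exponent A" "growing_exponent B"
  shows "growing_exponent (\<lambda>r. A r + B r)"
proof -
  obtain r where "A r \<noteq> 0" using assms(1) unfolding growing_exponent_def by blast
  with assms have "A r + B r \<noteq> 0" unfolding growing_exponent_def by (smt (verit))
  with assms show ?thesis unfolding growing_exponent_def by (auto intro: pos_spectrum_add)
qed

definition dominates :: "(real \<Rightarrow> real) \<Rightarrow> (real \<Rightarrow> real) \<Rightarrow> bool" where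
  "dominates B A \<longleftrightarrow> filterlim (\<lambda>y. exp_poly B y - exp_poly A y) at_top at_top"

lemma dominates_trans: "dominates C B \<Longrightarrow> dominates B A \<Longrightarrow> dominates C A"
  unfolding dominates_def
  by (drule (1) filterlim_at_top_add_at_top) (simp add: algebra_simps)

lemma dominates_total:
  assumes "pos_spectrum A" "pos_spectrum B" "A \<noteq> B"
  shows "dominates A B \<or> dominates B A"
proof -
  let ?D = "\<lambda>r. A r - B r"
  have D: "pos_spectrum ?D" using assms(1,2) by (rule pos_spectrum_diff)
  have ne: "{r. ?D r \<noteq> 0} \<noteq> {}" using assms(3) by auto
  have "finite {r. ?D r \<noteq> 0}" using D unfolding pos_spectrum_def by auto
  then have "?D (Max {r. ?D r \<noteq> 0}) \<noteq> 0" using Max_in[OF _ ne] by simp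
  then have "filterlim (exp_poly ?D) at_top at_top \<or> filterlim (exp_poly ?D) at_bot at_top"
    using exp_poly_tendsto_infinity[OF D ne] by (meson linorder_neqE_linordered_idom)
  moreover have "exp_poly ?D = (\<lambda>y. exp_poly A y - exp_poly B y)"
    using assms(1,2) unfolding pos_spectrum_def by (auto intro: exp_poly_diff)
  ultimately show ?thesis
    unfolding dominates_def by (auto simp: filterlim_uminus_at_bot)
qed

section \<open>Sums of exponentials of exponential polynomials\<close>

lemma finite_has_greatest_wrt:
  assumes "finite F" "F \<noteq> {}"
    and trans: "\<And>a b c. a \<in> F \<Longrightarrow> b \<in> F \<Longrightarrow> c \<in> F \<Longrightarrow> lt a b \<Longrightarrow> lt b c \<Longrightarrow> lt a c"
    and total: "\<And>a b. a \<in> F \<Longrightarrow> b \<in> F \<Longrightarrow> a \<noteq> b \<Longrightarrow> lt a b \<or> lt b a"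
  shows "\<exists>m\<in>F. \<forall>x\<in>F. x \<noteq> m \<longrightarrow> lt x m"
  using assms
proof (induction F rule: finite_ne_induct)
  case (insert x F)
  then obtain m where m: "m \<in> F" "\<forall>y\<in>F. y \<noteq> m \<longrightarrow> lt y m" by (metis insertCI)
  show ?case
  proof (cases "lt m x")
    case True
    have "lt y x" if "y \<in> F" "y \<noteq> x" for y
      using m True insert.prems(1)[of y m x] that by (cases "y = m") auto
    then have "\<forall>y\<in>insert x F. y \<noteq> x \<longrightarrow> lt y x" by auto
    then show ?thesis by blast
  next
    case False
    have "x \<noteq> m" using insert.hyps m(1) by auto
    with False insert.prems(2)[of x m] m(1) have "lt x m" by auto
    with m show ?thesis by blast
  qed
qed auto

lemma sum_exp_dominant_limit:
  assumes "finite J" "M \<in> J" and dom: "\<And>j. j \<in> J \<Longrightarrow> j \<noteq> M \<Longrightarrow> dominates (E M) (E j)"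
  shows "((\<lambda>y. \<Sum>j\<in>J. c j * exp (exp_poly (E j) y - exp_poly (E M) y)) \<longlongrightarrow> c M) at_top"
proof -
  have "((\<lambda>y. c j * exp (exp_poly (E j) y - exp_poly (E M) y)) \<longlongrightarrow> (if j = M then c M else 0)) at_top"
    if "j \<in> J" for j
  proof (cases "j = M")
    case False
    with dom that have "filterlim (\<lambda>y. exp_poly (E j) y - exp_poly (E M) y) at_bot at_top"
      unfolding dominates_def by (subst filterlim_uminus_at_bot) (simp add: algebra_simps)
    then have "((\<lambda>y. exp (exp_poly (E j) y - exp_poly (E M) y)) \<longlongrightarrow> 0) at_top"
      by (rule filterlim_compose[OF exp_at_bot])
    with False show ?thesis by (auto intro: tendsto_mult_right_zero)
  qed simp
  then have "((\<lambda>y. \<Sum>j\<in>J. c j * exp (exp_poly (E j) y - exp_poly (E M) y))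
      \<longlongrightarrow> (\<Sum>j\<in>J. if j = M then c M else 0)) at_top"
    by (rule tendsto_sum)
  with assms(1,2) show ?thesis by (simp add: sum.delta)
qed

lemma sum_exp_growing_exponents_tendsto_infinity:
  assumes fin: "finite J" and inj: "inj_on E J" and E: "\<And>j. j \<in> J \<Longrightarrow> growing_exponent (E j)"
    and nz: "\<exists>j\<in>J. c j \<noteq> 0"
  shows "filterlim (\<lambda>y. \<bar>\<Sum>j\<in>J. c j * exp (exp_poly (E j) y)\<bar>) at_top at_top"
proof -
  define J' where "J' = {j\<in>J. c j \<noteq> 0}"
  have J': "finite J'" "J' \<noteq> {}" "J' \<subseteq> J" using fin nz unfolding J'_def by auto
  have sum_J': "(\<Sum>j\<in>J. c j * f j) = (\<Sum>j\<in>J'. c j * f j)" for f :: "_ \<Rightarrow> real"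
    unfolding J'_def by (rule sum.mono_neutral_right) (use fin in auto)
  have spec: "pos_spectrum (E j)" if "j \<in> J" for j
    using E[OF that] unfolding growing_exponent_def by blast
  have "\<exists>M\<in>J'. \<forall>j\<in>J'. j \<noteq> M \<longrightarrow> dominates (E M) (E j)"
  proof (rule finite_has_greatest_wrt[OF J'(1,2)])
    show "dominates (E c) (E a)" if "dominates (E b) (E a)" "dominates (E c) (E b)" for a b c
      using that by (blast intro: dominates_trans)
    fix a b assume ab: "a \<in> J'" "b \<in> J'" "a \<noteq> b"
    with inj J'(3) have "E a \<noteq> E b" by (auto dest: inj_onD)
    with ab J'(3) spec show "dominates (E b) (E a) \<or> dominates (E a) (E b)"
      using dominates_total by blast
  qed
  then obtain M where M: "M \<in> J'" "\<And>j. j \<in> J' \<Longrightarrow> j \<noteq> M \<Longrightarrow> dominates (E M) (E j)"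
    by blast
  have "((\<lambda>y. \<bar>\<Sum>j\<in>J'. c j * exp (exp_poly (E j) y - exp_poly (E M) y)\<bar>) \<longlongrightarrow> \<bar>c M\<bar>) at_top"
    by (intro tendsto_rabs sum_exp_dominant_limit J'(1) M)
  moreover have "\<bar>c M\<bar> > 0" using M(1) unfolding J'_def by simp
  moreover have "filterlim (\<lambda>y. exp (exp_poly (E M) y)) at_top at_top"
    using E M(1) J'(3) by (intro filterlim_compose[OF exp_at_top] growing_exponent_tendsto) auto
  ultimately have "filterlim (\<lambda>y. \<bar>\<Sum>j\<in>J'. c j * exp (exp_poly (E j) y - exp_poly (E M) y)\<bar>
      * exp (exp_poly (E M) y)) at_top at_top"
    by (rule filterlim_tendsto_pos_mult_at_top)
  moreover have "\<bar>\<Sum>j\<in>J'. c j * exp (exp_poly (E j) y - exp_poly (E M) y)\<bar> * exp (exp_poly (E M) y)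
      = \<bar>\<Sum>j\<in>J. c j * exp (exp_poly (E j) y)\<bar>" for y
    by (simp add: sum_J' abs_mult exp_diff sum_divide_distrib[symmetric])
  ultimately show ?thesis by simp
qed

definition exp_exp_polys :: "(real \<Rightarrow> real) set" where
  "exp_exp_polys = {(\<lambda>y. \<Sum>E\<in>\<Phi>. c E * exp (exp_poly E y)) | \<Phi> c.
      finite \<Phi> \<and> (\<forall>E\<in>\<Phi>. growing_exponent E)}"

lemma exp_exp_polysI:
  fixes E :: "'j \<Rightarrow> real \<Rightarrow> real"
  assumes "finite J" "\<And>j. j \<in> J \<Longrightarrow> growing_exponent (E j)"
  shows "(\<lambda>y. \<Sum>j\<in>J. c j * exp (exp_poly (E j) y)) \<in> exp_exp_polys"
proof -
  have "(\<Sum>j\<in>J. c j * exp (exp_poly (E j) y))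
      = (\<Sum>B\<in>E ` J. (\<Sum>j\<in>{j\<in>J. E j = B}. c j) * exp (exp_poly B y))" for y
    by (subst sum.image_gen[OF assms(1)]) (auto simp: sum_distrib_right intro!: sum.cong)
  with assms show ?thesis unfolding exp_exp_polys_def
    by (intro CollectI exI[of _ "E ` J"] exI[of _ "\<lambda>B. \<Sum>j\<in>{j\<in>J. E j = B}. c j"]) auto
qed

lemma exp_exp_polys_add:
  assumes "Q1 \<in> exp_exp_polys" "Q2 \<in> exp_exp_polys"
  shows "(\<lambda>y. Q1 y + Q2 y) \<in> exp_exp_polys"
proof -
  obtain \<Phi>1 c1 where 1: "finite \<Phi>1" "\<And>E. E \<in> \<Phi>1 \<Longrightarrow> growing_exponent E"
    "Q1 = (\<lambda>y. \<Sum>E\<in>\<Phi>1. c1 E * exp (exp_poly E y))"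
    using assms(1) unfolding exp_exp_polys_def by blast
  obtain \<Phi>2 c2 where 2: "finite \<Phi>2" "\<And>E. E \<in> \<Phi>2 \<Longrightarrow> growing_exponent E"
    "Q2 = (\<lambda>y. \<Sum>E\<in>\<Phi>2. c2 E * exp (exp_poly E y))"
    using assms(2) unfolding exp_exp_polys_def by blast
  have "(\<lambda>y. Q1 y + Q2 y)
      = (\<lambda>y. \<Sum>j\<in>\<Phi>1 <+> \<Phi>2. case_sum c1 c2 j * exp (exp_poly (case_sum id id j) y))"
    by (simp add: 1(1,3) 2(1,3) sum.Plus comp_def)
  also have "\<dots> \<in> exp_exp_polys"
    using 1 2 by (intro exp_exp_polysI) auto
  finally show ?thesis .
qed

lemma exp_exp_polys_mult:
  assumes "Q1 \<in> exp_exp_polys" "Q2 \<in> exp_exp_polys"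
  shows "(\<lambda>y. Q1 y * Q2 y) \<in> exp_exp_polys"
proof -
  obtain \<Phi>1 c1 where 1: "finite \<Phi>1" "\<And>E. E \<in> \<Phi>1 \<Longrightarrow> growing_exponent E"
    "Q1 = (\<lambda>y. \<Sum>E\<in>\<Phi>1. c1 E * exp (exp_poly E y))"
    using assms(1) unfolding exp_exp_polys_def by blast
  obtain \<Phi>2 c2 where 2: "finite \<Phi>2" "\<And>E. E \<in> \<Phi>2 \<Longrightarrow> growing_exponent E"
    "Q2 = (\<lambda>y. \<Sum>E\<in>\<Phi>2. c2 E * exp (exp_poly E y))"
    using assms(2) unfolding exp_exp_polys_def by blast
  define E where "E p = (\<lambda>r. fst p r + snd p r)" for p :: "(real \<Rightarrow> real) \<times> (real \<Rightarrow> real)"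
  have E: "growing_exponent (E p)" if "p \<in> \<Phi>1 \<times> \<Phi>2" for p
    using 1(2)[of "fst p"] 2(2)[of "snd p"] that unfolding E_def
    by (auto intro: growing_exponent_add)
  have "exp_poly (E p) y = exp_poly (fst p) y + exp_poly (snd p) y" if "p \<in> \<Phi>1 \<times> \<Phi>2" for p y
    using 1(2)[of "fst p"] 2(2)[of "snd p"] that
    unfolding E_def growing_exponent_def pos_spectrum_def by (intro exp_poly_add) auto
  then have "(\<lambda>y. Q1 y * Q2 y)
      = (\<lambda>y. \<Sum>p\<in>\<Phi>1 \<times> \<Phi>2. (c1 (fst p) * c2 (snd p)) * exp (exp_poly (E p) y))"
    unfolding 1(3) 2(3) sum_product sum.cartesian_product
    by (auto simp: exp_add case_prod_beta intro!: sum.cong)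
  also have "\<dots> \<in> exp_exp_polys"
    using 1 2 E by (intro exp_exp_polysI) auto
  finally show ?thesis .
qed

lemma exp_exp_polys_scale:
  assumes "Q \<in> exp_exp_polys"
  shows "(\<lambda>y. k * Q y) \<in> exp_exp_polys"
proof -
  obtain \<Phi> c where "finite \<Phi>" "\<And>E. E \<in> \<Phi> \<Longrightarrow> growing_exponent E"
    "Q = (\<lambda>y. \<Sum>E\<in>\<Phi>. c E * exp (exp_poly E y))" using assms unfolding exp_exp_polys_def by blast
  then show ?thesis
    using exp_exp_polysI[of \<Phi> id "\<lambda>E. k * c E"] by (simp add: sum_distrib_left mult.assoc)
qed

lemma exp_exp_in_exp_exp_polys: "(\<lambda>y. exp (exp (b * y))) \<in> exp_exp_polys" if "b > 0"
proof -
  define A :: "real \<Rightarrow> real" where "A r = (if r = b then 1 else 0)" for r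
  have supp: "{r. A r \<noteq> 0} = {b}" unfolding A_def by auto
  then have "growing_exponent A"
    using that unfolding growing_exponent_def pos_spectrum_def by (auto simp: A_def)
  moreover have "exp_poly A y = exp (b * y)" for y
    unfolding exp_poly_def supp by (simp add: A_def)
  ultimately show ?thesis using exp_exp_polysI[of "{A}" id "\<lambda>_. 1"] by simp
qed

lemma exp_exp_polys_dichotomy:
  assumes "Q \<in> exp_exp_polys"
  shows "Q = (\<lambda>y. 0) \<or> filterlim (\<lambda>y. \<bar>Q y\<bar>) at_top at_top"
proof -
  obtain \<Phi> c where \<Phi>: "finite \<Phi>" "\<And>E. E \<in> \<Phi> \<Longrightarrow> growing_exponent E"
    and Q: "Q = (\<lambda>y. \<Sum>E\<in>\<Phi>. c E * exp (exp_poly E y))"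
    using assms unfolding exp_exp_polys_def by blast
  show ?thesis
  proof (cases "\<exists>E\<in>\<Phi>. c E \<noteq> 0")
    case True
    then show ?thesis
      using sum_exp_growing_exponents_tendsto_infinity[of \<Phi> id] \<Phi> unfolding Q by simp
  qed (simp add: Q)
qed

lemma exp_exp_polys_continuous: "Q \<in> exp_exp_polys \<Longrightarrow> continuous_on UNIV Q"
  unfolding exp_exp_polys_def exp_poly_def by (auto intro!: continuous_intros)

lemma exp_exp_polys_entire:
  assumes "Q \<in> exp_exp_polys"
  obtains F where "F holomorphic_on UNIV" "\<And>y. F (complex_of_real y) = complex_of_real (Q y)"
proof -
  obtain \<Phi> c where Q: "Q = (\<lambda>y. \<Sum>E\<in>\<Phi>. c E * exp (exp_poly E y))"
    using assms unfolding exp_exp_polys_def by blast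
  define F :: "complex \<Rightarrow> complex" where "F z = (\<Sum>E\<in>\<Phi>. of_real (c E) *
      exp (\<Sum>r\<in>{r. E r \<noteq> 0}. of_real (E r) * exp (of_real r * z)))" for z
  have "F holomorphic_on UNIV" unfolding F_def by (intro holomorphic_intros)
  moreover have "F (complex_of_real y) = complex_of_real (Q y)" for y
    unfolding F_def Q exp_poly_def by (simp add: exp_of_real[symmetric])
  ultimately show ?thesis using that by blast
qed

section \<open>Non-measurable limits\<close>

lemma countable_unit_shift_coincidences:
  fixes f :: "real \<Rightarrow> real" and F :: "complex \<Rightarrow> complex"
  assumes F: "F holomorphic_on UNIV" "\<And>y. F (complex_of_real y) = complex_of_real (f y)"
    and lim: "filterlim (\<lambda>y. \<bar>f y\<bar>) at_top at_top"
  shows "countable {y. f (y + 1) = f y}"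
proof (rule ccontr)
  assume unc: "uncountable {y. f (y + 1) = f y}"
  have "complex_of_real ` {y. f (y + 1) = f y} \<subseteq> {z. F (z + 1) = F z}"
  proof
    fix z assume "z \<in> complex_of_real ` {y. f (y + 1) = f y}"
    then obtain y where "z = complex_of_real y" "f (y + 1) = f y" by auto
    moreover have "complex_of_real y + 1 = complex_of_real (y + 1)" by simp
    ultimately show "z \<in> {z. F (z + 1) = F z}" by (simp only: F(2) mem_Collect_eq)
  qed
  moreover have "uncountable (complex_of_real ` {y. f (y + 1) = f y})"
  proof
    assume "countable (complex_of_real ` {y. f (y + 1) = f y})"
    then have "countable {y. f (y + 1) = f y}"
      by (rule countable_image_inj_on) (auto simp: inj_on_def)
    with unc show False by simp
  qed
  ultimately have "uncountable {z. F (z + 1) = F z}" using countable_subset by blast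
  moreover have "(\<lambda>z. F (z + 1)) holomorphic_on UNIV"
    by (intro holomorphic_on_compose_gen[OF _ F(1), unfolded o_def] holomorphic_intros) auto
  ultimately have "(\<lambda>z. F (z + 1)) = F"
    by (intro holomorphic_countable_equal_UNIV F(1)) auto
  then have "F (complex_of_real y + 1) = F (complex_of_real y)" for y by metis
  then have shift: "f (y + 1) = f y" for y
    using F(2)[of "y + 1"] F(2)[of y] by simp
  have "f (real n) = f 0" for n
  proof (induction n)
    case (Suc n)
    then show ?case using shift[of "real n"] by (simp add: add.commute)
  qed simp
  moreover have "eventually (\<lambda>n. \<bar>f (real n)\<bar> > \<bar>f 0\<bar>) sequentially"
    using filterlim_compose[OF lim filterlim_real_sequentially]
    by (simp add: filterlim_at_top_dense)
  then obtain n where "\<bar>f (real n)\<bar> > \<bar>f 0\<bar>" using eventually_sequentially by auto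
  ultimately show False by simp
qed

lemma indicator_shift_not_measurable:
  fixes f :: "real \<Rightarrow> real"
  assumes f[measurable]: "f \<in> borel_measurable borel"
    and Z: "countable {y. f (y + 1) = f y}" and B: "B \<notin> sets lebesgue"
  shows "(\<lambda>t. f (t + indicator B t)) \<notin> borel_measurable lebesgue"
proof
  let ?g = "\<lambda>t. f (t + indicator B t)" and ?Z = "{y. f (y + 1) = f y}"
  assume [measurable]: "?g \<in> borel_measurable lebesgue"
  have [measurable]: "f \<in> borel_measurable lebesgue"
    by (rule measurable_completion) (simp add: f)
  have "{t \<in> space lebesgue. ?g t \<noteq> f t} \<in> sets lebesgue" by measurable
  moreover have "B \<inter> ?Z \<in> null_sets lebesgue"
    using null_sets_completionI[OF countable_imp_null_set_lborel[OF Z]]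
    by (rule completion.complete2[rotated]) blast
  ultimately have "{t \<in> space lebesgue. ?g t \<noteq> f t} \<union> (B \<inter> ?Z) \<in> sets lebesgue" by auto
  moreover have "{t \<in> space lebesgue. ?g t \<noteq> f t} \<union> (B \<inter> ?Z) = B"
    by (auto simp: indicator_def)
  ultimately show False using B by simp
qed

section \<open>The generators\<close>

lemma gen_alg_exp_exp_generators:
  fixes Y :: "'i \<Rightarrow> real \<Rightarrow> real"
  assumes "f \<in> gen_alg (range (\<lambda>u a t. exp (exp (exp u * Y a t))))"
  shows "\<exists>Q\<in>exp_exp_polys. f = (\<lambda>a t. Q (Y a t))"
  using assms
proof (induction rule: gen_alg.induct)
  case (gen_base x)
  then obtain u where "x = (\<lambda>a t. exp (exp (exp u * Y a t)))" by auto
  then show ?case using exp_exp_in_exp_exp_polys[of "exp u"] by auto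
next
  case (gen_add f g)
  then show ?case unfolding seq_add_def by (auto dest: exp_exp_polys_add)
next
  case (gen_mult f g)
  then show ?case unfolding seq_mult_def by (auto dest: exp_exp_polys_mult)
next
  case (gen_scale f k)
  then show ?case unfolding seq_scale_def by (auto dest: exp_exp_polys_scale[of _ k])
qed

definition monomial_freqs :: "(nat \<Rightarrow> real) \<Rightarrow> (nat \<Rightarrow>\<^sub>0 nat) \<Rightarrow> real \<Rightarrow> real" where
  "monomial_freqs b m r = (\<Sum>i\<in>{i\<in>Poly_Mapping.keys m. b i = r}. real (Poly_Mapping.lookup m i))"

lemma poly_eval_exp_exp:
  assumes xs: "\<And>i. i \<in> K \<Longrightarrow> xs i = (\<lambda>a t. exp (exp (b i * Y a t)))"
    and supp_p: "\<forall>m\<in>Poly_Mapping.keys p. Poly_Mapping.keys m \<subseteq> K"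
  shows "poly_eval p xs a t = (\<Sum>m\<in>Poly_Mapping.keys p.
      Poly_Mapping.lookup p m * exp (exp_poly (monomial_freqs b m) (Y a t)))"
  unfolding poly_eval_def
proof (rule sum.cong[OF refl])
  fix m assume "m \<in> Poly_Mapping.keys p"
  with supp_p have "i \<in> K" if "i \<in> Poly_Mapping.keys m" for i using that by auto
  with xs have "(\<Prod>i\<in>Poly_Mapping.keys m. xs i a t ^ Poly_Mapping.lookup m i)
      = (\<Prod>i\<in>Poly_Mapping.keys m. exp (real (Poly_Mapping.lookup m i) * exp (b i * Y a t)))"
    by (auto simp: exp_of_nat_mult intro!: prod.cong)
  also have "\<dots> = exp (\<Sum>i\<in>Poly_Mapping.keys m. real (Poly_Mapping.lookup m i) * exp (b i * Y a t))"
    by (simp add: exp_sum)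
  also have "\<dots> = exp (exp_poly (monomial_freqs b m) (Y a t))"
    unfolding monomial_freqs_def by (subst sum_exp_eq_exp_poly) simp_all
  finally show "Poly_Mapping.lookup p m * (\<Prod>i\<in>Poly_Mapping.keys m. xs i a t ^ Poly_Mapping.lookup m i)
      = Poly_Mapping.lookup p m * exp (exp_poly (monomial_freqs b m) (Y a t))" by simp
qed

lemma growing_exponent_monomial_freqs:
  assumes b: "\<And>i. 0 < b i" and "m \<noteq> 0"
  shows "growing_exponent (monomial_freqs b m)"
proof -
  have supp: "{r. monomial_freqs b m r \<noteq> 0} \<subseteq> b ` Poly_Mapping.keys m"
  proof
    fix r assume "r \<in> {r. monomial_freqs b m r \<noteq> 0}"
    then have "{i\<in>Poly_Mapping.keys m. b i = r} \<noteq> {}"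
      unfolding monomial_freqs_def by (intro notI) simp
    then show "r \<in> b ` Poly_Mapping.keys m" by auto
  qed
  obtain i where i: "i \<in> Poly_Mapping.keys m" using \<open>m \<noteq> 0\<close> by (metis keys_eq_empty ex_in_conv)
  have "real (Poly_Mapping.lookup m i) \<le> monomial_freqs b m (b i)"
    unfolding monomial_freqs_def using i by (intro member_le_sum) auto
  moreover have "0 < real (Poly_Mapping.lookup m i)" using i by (simp add: in_keys_iff)
  ultimately have "monomial_freqs b m (b i) \<noteq> 0" by linarith
  moreover have "0 \<le> monomial_freqs b m r" for r
    unfolding monomial_freqs_def by (simp add: sum_nonneg)
  moreover have "finite {r. monomial_freqs b m r \<noteq> 0}" using supp by (rule finite_subset) simp
  ultimately show ?thesis
    using supp b unfolding growing_exponent_def pos_spectrum_def by blast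
qed

lemma monomial_freqs_at:
  assumes "inj_on b K" "Poly_Mapping.keys m \<subseteq> K" "i \<in> K"
  shows "monomial_freqs b m (b i) = real (Poly_Mapping.lookup m i)"
proof -
  have "{k\<in>Poly_Mapping.keys m. b k = b i} = (if i \<in> Poly_Mapping.keys m then {i} else {})"
    using assms unfolding inj_on_def by auto
  then show ?thesis unfolding monomial_freqs_def by (auto simp: in_keys_iff)
qed

lemma inj_on_monomial_freqs:
  assumes "inj_on b K"
  shows "inj_on (monomial_freqs b) {m. Poly_Mapping.keys m \<subseteq> K}"
proof (rule inj_onI)
  fix m m' assume m: "m \<in> {m. Poly_Mapping.keys m \<subseteq> K}" "m' \<in> {m. Poly_Mapping.keys m \<subseteq> K}"
    and eq: "monomial_freqs b m = monomial_freqs b m'"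
  show "m = m'"
  proof (rule poly_mapping_eqI)
    fix i
    show "Poly_Mapping.lookup m i = Poly_Mapping.lookup m' i"
    proof (cases "i \<in> K")
      case True
      then have "real (Poly_Mapping.lookup m i) = real (Poly_Mapping.lookup m' i)"
        using eq monomial_freqs_at[OF assms] m by (metis mem_Collect_eq)
      then show ?thesis by simp
    next
      case False
      then have "i \<notin> Poly_Mapping.keys m" "i \<notin> Poly_Mapping.keys m'" using m by auto
      then show ?thesis by (simp add: in_keys_iff)
    qed
  qed
qed

lemma alg_indep_exp_exp_generators:
  fixes Y :: "'i \<Rightarrow> real \<Rightarrow> real"
  assumes Y: "\<And>a t. t \<le> Y a t"
  shows "alg_indep (range (\<lambda>u a t. exp (exp (exp u * Y a t))))"
  unfolding alg_indep_def
proof (intro allI impI, elim conjE)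
  fix n xs and p :: "(nat \<Rightarrow>\<^sub>0 nat) \<Rightarrow>\<^sub>0 real"
  assume inj: "inj_on xs {..<n}" and sub: "xs ` {..<n} \<subseteq> range (\<lambda>u a t. exp (exp (exp u * Y a t)))"
    and "p \<noteq> 0" and const: "Poly_Mapping.lookup p 0 = 0"
    and supp_p: "\<forall>m\<in>Poly_Mapping.keys p. Poly_Mapping.keys m \<subseteq> {..<n}"
  have "\<forall>i\<in>{..<n}. \<exists>u. xs i = (\<lambda>a t. exp (exp (exp u * Y a t)))" using sub by blast
  from bchoice[OF this] obtain w
    where w: "\<And>i. i \<in> {..<n} \<Longrightarrow> xs i = (\<lambda>a t. exp (exp (exp (w i) * Y a t)))" by blast
  define b where "b i = exp (w i)" for i
  have "inj_on b {..<n}"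
  proof (rule inj_onI)
    fix i j assume "i \<in> {..<n}" "j \<in> {..<n}" "b i = b j"
    with w have "xs i = xs j" unfolding b_def by simp
    with inj \<open>i \<in> {..<n}\<close> \<open>j \<in> {..<n}\<close> show "i = j" by (simp add: inj_on_eq_iff)
  qed
  then have "inj_on (monomial_freqs b) (Poly_Mapping.keys p)"
    using supp_p by (auto intro: inj_on_subset[OF inj_on_monomial_freqs])
  moreover have "growing_exponent (monomial_freqs b m)" if "m \<in> Poly_Mapping.keys p" for m
    using that const by (intro growing_exponent_monomial_freqs) (auto simp: b_def in_keys_iff)
  moreover obtain m where "m \<in> Poly_Mapping.keys p"
    using \<open>p \<noteq> 0\<close> by (metis keys_eq_empty ex_in_conv)
  then have "\<exists>m\<in>Poly_Mapping.keys p. Poly_Mapping.lookup p m \<noteq> 0" by (auto simp: in_keys_iff)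
  ultimately have "filterlim (\<lambda>y. \<bar>\<Sum>m\<in>Poly_Mapping.keys p.
      Poly_Mapping.lookup p m * exp (exp_poly (monomial_freqs b m) y)\<bar>) at_top at_top"
    by (intro sum_exp_growing_exponents_tendsto_infinity) auto
  then have "eventually (\<lambda>y. \<bar>\<Sum>m\<in>Poly_Mapping.keys p.
      Poly_Mapping.lookup p m * exp (exp_poly (monomial_freqs b m) y)\<bar> > 0) at_top"
    unfolding filterlim_at_top_dense by blast
  then obtain R where R: "\<And>y. R \<le> y \<Longrightarrow>
      (\<Sum>m\<in>Poly_Mapping.keys p. Poly_Mapping.lookup p m * exp (exp_poly (monomial_freqs b m) y)) \<noteq> 0"
    unfolding eventually_at_top_linorder by fastforce
  have "poly_eval p xs a R = (\<Sum>m\<in>Poly_Mapping.keys p.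
      Poly_Mapping.lookup p m * exp (exp_poly (monomial_freqs b m) (Y a R)))" for a
    using w supp_p unfolding b_def by (intro poly_eval_exp_exp) auto
  with R[OF Y] have "poly_eval p xs undefined R \<noteq> 0" by simp
  then show "poly_eval p xs \<noteq> (\<lambda>a t. 0)" by auto
qed

lemma inj_exp_exp_generators:
  fixes Y :: "'i \<Rightarrow> real \<Rightarrow> real"
  assumes Y: "\<And>a t. t \<le> Y a t"
  shows "inj (\<lambda>u a t. exp (exp (exp u * Y a t)))"
proof (rule injI)
  fix u v assume "(\<lambda>a t. exp (exp (exp u * Y a t))) = (\<lambda>a t. exp (exp (exp v * Y a t)))"
  from fun_cong[OF fun_cong[OF this, where x = undefined], where x = 1]
  have "exp u * Y undefined 1 = exp v * Y undefined 1" by simp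
  moreover have "Y undefined 1 > 0" using Y[where a = undefined and t = 1] by simp
  ultimately show "u = v" by simp
qed

section \<open>Sequences of length add(N)\<close>

lemma addN_exhausting_null_family:
  fixes r :: "'i rel"
  assumes "card_order r" "is_addN r"
  obtains B :: "real set" and S :: "'i \<Rightarrow> real set"
  where "B \<notin> sets lebesgue" "\<And>\<alpha>. S \<alpha> \<in> null_sets lebesgue" "\<And>\<alpha>. S \<alpha> \<subseteq> B"
    "\<And>t. t \<in> B \<Longrightarrow> \<exists>\<beta>\<in>Field r. \<forall>\<alpha>. (\<beta>, \<alpha>) \<in> r \<and> \<alpha> \<noteq> \<beta> \<longrightarrow> t \<in> S \<alpha>"
proof -
  have Cr: "Card_order r" and Fr: "Field r = UNIV"
    using card_order_on_Card_order[OF assms(1)] by auto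
  obtain F :: "real set set"
    where F: "F \<subseteq> null_sets lebesgue" "ordIso2 (card_of F) r" "\<Union>F \<notin> null_sets lebesgue"
    and small: "\<And>G :: real set set. G \<subseteq> null_sets lebesgue \<Longrightarrow> ordLess2 (card_of G) r \<Longrightarrow>
      \<Union>G \<in> null_sets lebesgue"
    using assms(2) unfolding is_addN_def by blast
  have "ordIso2 (card_of (UNIV::'i set)) (card_of F)"
    using card_of_Field_ordIso[OF Cr] F(2) Fr by (metis ordIso_symmetric ordIso_transitive)
  then obtain e where "bij_betw e (UNIV::'i set) F" using card_of_ordIso by blast
  then have eF: "e ` UNIV = F" by (simp add: bij_betw_def)
  obtain B where B: "B \<subseteq> \<Union>F" "B \<notin> sets lebesgue" using nonmeasurable_subset[OF F(3)] by blast
  define S where "S \<alpha> = (\<Union>\<beta>\<in>underS r \<alpha>. e \<beta> \<inter> B)" for \<alpha>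
  show ?thesis
  proof (rule that[OF B(2)])
    fix \<alpha>
    have "e \<beta> \<inter> B \<in> null_sets lebesgue" for \<beta>
    proof (rule completion.complete2[OF Int_lower1])
      show "e \<beta> \<in> null_sets lebesgue" using F(1) eF by auto
    qed
    then have "(\<lambda>\<beta>. e \<beta> \<inter> B) ` underS r \<alpha> \<subseteq> null_sets lebesgue" by blast
    moreover have "ordLess2 (card_of ((\<lambda>\<beta>. e \<beta> \<inter> B) ` underS r \<alpha>)) r"
      using card_of_image ordLeq_ordLess_trans card_of_underS[OF Cr] Fr by blast
    ultimately show "S \<alpha> \<in> null_sets lebesgue" unfolding S_def using small by blast
    show "S \<alpha> \<subseteq> B" unfolding S_def by auto
  next
    fix t assume "t \<in> B"
    then obtain \<beta> where "t \<in> e \<beta>" using B(1) eF by auto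
    with \<open>t \<in> B\<close> have "t \<in> S \<alpha>" if "(\<beta>, \<alpha>) \<in> r" "\<alpha> \<noteq> \<beta>" for \<alpha>
      using that unfolding S_def underS_def by auto
    then show "\<exists>\<beta>\<in>Field r. \<forall>\<alpha>. (\<beta>, \<alpha>) \<in> r \<and> \<alpha> \<noteq> \<beta> \<longrightarrow> t \<in> S \<alpha>"
      unfolding Fr by blast
  qed
qed

lemma indicator_shift_in_AN:
  fixes r :: "'i rel" and S :: "'i \<Rightarrow> real set"
  assumes r: "card_order r" and Q: "Q \<in> exp_exp_polys" "Q \<noteq> (\<lambda>y. 0)"
    and B: "B \<notin> sets lebesgue" and S: "\<And>\<alpha>. S \<alpha> \<in> null_sets lebesgue" "\<And>\<alpha>. S \<alpha> \<subseteq> B"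
    and exhaust: "\<And>t. t \<in> B \<Longrightarrow> \<exists>\<beta>\<in>Field r. \<forall>\<alpha>. (\<beta>, \<alpha>) \<in> r \<and> \<alpha> \<noteq> \<beta> \<longrightarrow> t \<in> S \<alpha>"
  shows "(\<lambda>\<alpha> t. Q (t + indicator (S \<alpha>) t)) \<in> AN r"
proof -
  have [measurable]: "Q \<in> borel_measurable borel"
    using exp_exp_polys_continuous[OF Q(1)] by (rule borel_measurable_continuous_onI)
  have "(\<lambda>t. Q (t + indicator (S \<alpha>) t)) \<in> borel_measurable lebesgue" for \<alpha>
  proof -
    have [measurable]: "S \<alpha> \<in> sets lebesgue" using S(1) by auto
    have "(\<lambda>t. t) \<in> borel_measurable (lebesgue :: real measure)"
      by (rule measurable_completion) simp
    then have "(\<lambda>t. t + indicator (S \<alpha>) t :: real) \<in> borel_measurable lebesgue" by measurable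
    then show ?thesis by measurable
  qed
  moreover have "kconv r (\<lambda>\<alpha>. Q (t + indicator (S \<alpha>) t)) (Q (t + indicator B t))" for t
  proof (cases "t \<in> B")
    case True
    with exhaust obtain \<beta> where "\<beta> \<in> Field r" "\<And>\<alpha>. (\<beta>, \<alpha>) \<in> r \<and> \<alpha> \<noteq> \<beta> \<Longrightarrow> t \<in> S \<alpha>"
      by blast
    with True show ?thesis unfolding kconv_def by (metis indicator_simps(1))
  next
    case False
    with S(2) have "t \<notin> S \<alpha>" for \<alpha> by blast
    with False show ?thesis
      unfolding kconv_def using card_order_on_Card_order[OF r] by auto
  qed
  moreover have "(\<lambda>t. Q (t + indicator B t)) \<notin> borel_measurable lebesgue"
  proof (rule indicator_shift_not_measurable[OF _ _ B])
    show "Q \<in> borel_measurable borel" by measurable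
    obtain F where "F holomorphic_on UNIV" "\<And>y. F (complex_of_real y) = complex_of_real (Q y)"
      using exp_exp_polys_entire[OF Q(1)] by blast
    moreover have "filterlim (\<lambda>y. \<bar>Q y\<bar>) at_top at_top"
      using exp_exp_polys_dichotomy[OF Q(1)] Q(2) by blast
    ultimately show "countable {y. Q (y + 1) = Q y}" by (rule countable_unit_shift_coincidences)
  qed
  ultimately show ?thesis unfolding AN_def by blast
qed

theorem mainTheorem15:
  fixes r :: "'i rel"
  assumes "card_order r"
    and "is_addN r"
  shows "strongly_algebrable (UNIV :: real set) (AN r)"
proof -
  obtain B :: "real set" and S :: "'i \<Rightarrow> real set" where B: "B \<notin> sets lebesgue"
    and S: "\<And>\<alpha>. S \<alpha> \<in> null_sets lebesgue" "\<And>\<alpha>. S \<alpha> \<subseteq> B"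
    "\<And>t. t \<in> B \<Longrightarrow> \<exists>\<beta>\<in>Field r. \<forall>\<alpha>. (\<beta>, \<alpha>) \<in> r \<and> \<alpha> \<noteq> \<beta> \<longrightarrow> t \<in> S \<alpha>"
    using addN_exhausting_null_family[OF assms] by blast
  define Y where "Y \<alpha> t = t + indicator (S \<alpha>) t" for \<alpha> t
  define X where "X = range (\<lambda>u \<alpha> t. exp (exp (exp u * Y \<alpha> t)))"
  have Y: "t \<le> Y \<alpha> t" for \<alpha> t unfolding Y_def by (simp add: indicator_def)
  have "ordIso2 (card_of X) (card_of (UNIV :: real set))"
    unfolding X_def using inj_exp_exp_generators[of Y, OF Y]
    by (meson card_of_ordIso inj_on_imp_bij_betw ordIso_symmetric)
  moreover have "alg_indep X" unfolding X_def by (rule alg_indep_exp_exp_generators[of Y, OF Y])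
  moreover have "f \<in> AN r" if f: "f \<in> gen_alg X" "f \<noteq> (\<lambda>a t. 0)" for f
  proof -
    obtain Q where "Q \<in> exp_exp_polys" "f = (\<lambda>\<alpha> t. Q (Y \<alpha> t))"
      using gen_alg_exp_exp_generators[of f Y] f(1) unfolding X_def by blast
    with f(2) show ?thesis
      unfolding Y_def using indicator_shift_in_AN[OF assms(1)] B S by auto
  qed
  ultimately show ?thesis unfolding strongly_algebrable_def by blast
qed

end
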